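(* Let $K\in\mathbb{N}$, $\mathcal{X}=[0,1]^K$, and let $p,q$ be two probability density functions supported on $\mathcal{X}$ with finite differential entropies $h(p),h(q)$. Let $\varepsilon,A>0$ and assume that for all $\mathbf{x}\in\mathcal{X}$ we have $|p(\mathbf{x})-q(\mathbf{x})|\le\varepsilon$ and $0\le p(\mathbf{x})\le A$, and that $\frac{\varepsilon}{A}\le\alpha$, where $\alpha:=\frac{\sqrt{e^2+4}-e}{2e}$. Then \[ |h(p)-h(q)|\le\varepsilon\log\frac{A}{\varepsilon}. \]
   Context: $h(p)=-\int p\log p\,\mathrm{d}\lambda^K$ denotes differential entropy. *)

theory Defs
  imports "HOL-Analysis.Analysis"
begin

text \<open>The unit cube [0,1]^K inside real^'n (K = CARD('n)).\<close>
definition unit_cube :: "(real ^ 'n) set" where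
  "unit_cube = {x. \<forall>i. 0 \<le> x $ i \<and> x $ i \<le> 1}"

definition is_pdf_on_cube :: "(real ^ 'n \<Rightarrow> real) \<Rightarrow> bool" where
  "is_pdf_on_cube p \<longleftrightarrow>
     p \<in> borel_measurable lborel \<and> (\<forall>x. 0 \<le> p x) \<and>
     integrable lborel p \<and> (LINT x|lborel. p x) = 1 \<and>
     (\<forall>x. x \<notin> unit_cube \<longrightarrow> p x = 0)"

text \<open>Differential entropy h(p) = - \<integral> p ln p (natural log; 0 ln 0 = 0 since ln 0 = 0).\<close>
definition diff_entropy :: "(real ^ 'n \<Rightarrow> real) \<Rightarrow> real" where
  "diff_entropy p = - (LINT x|lborel. p x * ln (p x))"

definition has_finite_entropy :: "(real ^ 'n \<Rightarrow> real) \<Rightarrow> bool" where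
  "has_finite_entropy p \<longleftrightarrow> integrable lborel (\<lambda>x. p x * ln (p x))"

end

theory Submission
  imports Defs
begin

text \<open>
  Rescale by \<open>A\<close>: with \<open>\<delta> = \<epsilon>/A\<close>, the integrand of \<open>h(q) - h(p)\<close> equals, up to the term
  \<open>ln A (p - q)\<close> which integrates to zero, \<open>A (\<phi>(p/A) - \<phi>(q/A))\<close> with \<open>\<phi>(t) = t ln t\<close>.
  On \<open>[0, 1 + \<delta>]\<close> the function \<open>\<phi>\<close> has modulus of continuity \<open>-\<delta> ln \<delta>\<close> at scale \<open>\<delta>\<close> as long as
  \<open>1 + \<delta> \<le> -ln \<delta>\<close>, which the hypothesis on \<open>\<epsilon>/A\<close> guarantees since it forces \<open>\<delta> \<le> e\<^sup>-\<^sup>2\<close>.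
  Integrating \<open>A (-\<delta> ln \<delta>) = \<epsilon> ln (A/\<epsilon>)\<close> over the unit cube gives the claim.
\<close>

lemma xlnx_ge_tangent:
  fixes a b :: real
  assumes "0 \<le> a" and "0 < b"
  shows "a * ln b + a - b \<le> a * ln a"
proof (cases "a = 0")
  case False
  then have "0 < a" using assms(1) by simp
  have "ln b - ln a = ln (b / a)" using \<open>0 < a\<close> assms(2) by (simp add: ln_div)
  also have "\<dots> \<le> b / a - 1" using \<open>0 < a\<close> assms(2) by (intro ln_le_minus_one) simp
  finally have "a * (ln b - ln a) \<le> a * (b / a - 1)" using \<open>0 < a\<close> by (simp add: mult_left_mono)
  then show ?thesis using \<open>0 < a\<close> by (simp add: algebra_simps)
qed (use assms in simp)

lemma xlnx_decrease_le:
  fixes a b \<delta> :: real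
  assumes "0 \<le> a" and "a \<le> b" and "b - a \<le> \<delta>" and "0 < \<delta>" and "1 + \<delta> \<le> - ln \<delta>"
  shows "a * ln a - b * ln b \<le> - \<delta> * ln \<delta>"
proof (cases "a = b")
  case True
  have "ln \<delta> \<le> 0" using assms(4,5) by linarith
  then have "\<delta> * ln \<delta> \<le> 0" using assms(4) by (intro mult_nonneg_nonpos) auto
  then show ?thesis using True by simp
next
  case False
  define d where "d = b - a"
  have "0 < d" "0 < b" using False assms(1,2) d_def by auto
  have "a * ln a \<le> a * ln b"
    using assms(1,2) \<open>0 < b\<close> by (cases "a = 0") (auto intro: mult_left_mono)
  then have "a * ln a - b * ln b \<le> - d * ln b" by (simp add: d_def algebra_simps)
  also have "\<dots> \<le> - d * ln d"
    using \<open>0 < d\<close> assms(1) by (intro mult_left_mono_neg) (auto simp: d_def)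
  also have "\<dots> \<le> \<delta> - d * (ln \<delta> + 1)"
    using xlnx_ge_tangent[of d \<delta>] \<open>0 < d\<close> assms(4) by (simp add: algebra_simps)
  also have "\<dots> \<le> \<delta> - \<delta> * (ln \<delta> + 1)"
    using assms(3,4,5) by (intro diff_left_mono mult_right_mono_neg) (auto simp: d_def)
  finally show ?thesis by (simp add: algebra_simps)
qed

lemma xlnx_increase_le:
  fixes a b \<delta> :: real
  assumes "0 \<le> a" and "a \<le> b" and "b - a \<le> \<delta>" and "b \<le> 1 + \<delta>"
    and "0 < \<delta>" and "1 + \<delta> \<le> - ln \<delta>"
  shows "b * ln b - a * ln a \<le> - \<delta> * ln \<delta>"
proof (cases "b = 0")
  case True
  have "ln \<delta> \<le> 0" using assms(5,6) by linarith
  then have "\<delta> * ln \<delta> \<le> 0" using assms(5) by (intro mult_nonneg_nonpos) auto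
  then show ?thesis using True assms(1,2) by simp
next
  case False
  define d where "d = b - a"
  have "0 < b" "0 \<le> d" using False assms(1,2) d_def by auto
  have "b * ln b - a * ln a \<le> d * (1 + ln b)"
    using xlnx_ge_tangent[of a b] assms(1) \<open>0 < b\<close> by (simp add: d_def algebra_simps)
  also have "\<dots> \<le> d * (1 + \<delta>)"
    using ln_le_minus_one[OF \<open>0 < b\<close>] assms(4) \<open>0 \<le> d\<close> by (intro mult_left_mono) auto
  also have "\<dots> \<le> \<delta> * (1 + \<delta>)"
    using assms(3,5) by (intro mult_right_mono) (auto simp: d_def)
  also have "\<dots> \<le> \<delta> * (- ln \<delta>)"
    using assms(5,6) by (intro mult_left_mono) auto
  finally show ?thesis by simp
qed

lemma abs_xlnx_diff_le:
  fixes u v \<delta> :: real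
  assumes "0 \<le> u" and "u \<le> 1" and "0 \<le> v" and "\<bar>u - v\<bar> \<le> \<delta>"
    and "0 < \<delta>" and "1 + \<delta> \<le> - ln \<delta>"
  shows "\<bar>u * ln u - v * ln v\<bar> \<le> - \<delta> * ln \<delta>"
proof (cases "u \<le> v")
  case True
  then show ?thesis
    using xlnx_decrease_le[of u v \<delta>] xlnx_increase_le[of u v \<delta>] assms by auto
next
  case False
  then show ?thesis
    using xlnx_decrease_le[of v u \<delta>] xlnx_increase_le[of v u \<delta>] assms by auto
qed

lemma xlnx_scale:
  fixes t A :: real
  assumes "0 \<le> t" and "0 < A"
  shows "t * ln t - ln A * t = A * ((t / A) * ln (t / A))"
  using assms by (cases "t = 0") (simp_all add: ln_div algebra_simps)

lemma abs_xlnx_diff_shifted_le: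
  fixes s t A \<epsilon> :: real
  assumes "0 \<le> s" and "s \<le> A" and "0 \<le> t" and "\<bar>s - t\<bar> \<le> \<epsilon>"
    and "0 < \<epsilon>" and "0 < A" and "1 + \<epsilon> / A \<le> - ln (\<epsilon> / A)"
  shows "\<bar>s * ln s - t * ln t - ln A * (s - t)\<bar> \<le> \<epsilon> * ln (A / \<epsilon>)"
proof -
  define \<delta> where "\<delta> = \<epsilon> / A"
  have "\<bar>s / A - t / A\<bar> = \<bar>s - t\<bar> / A" using assms(6) by (simp add: diff_divide_distrib[symmetric])
  also have "\<dots> \<le> \<delta>" using assms(4,6) by (simp add: \<delta>_def divide_right_mono)
  finally have bound: "\<bar>(s / A) * ln (s / A) - (t / A) * ln (t / A)\<bar> \<le> - \<delta> * ln \<delta>"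
    using assms by (intro abs_xlnx_diff_le) (auto simp: \<delta>_def)
  have "s * ln s - t * ln t - ln A * (s - t)
      = A * ((s / A) * ln (s / A) - (t / A) * ln (t / A))"
    using xlnx_scale[of s A] xlnx_scale[of t A] assms(1,3,6) by (simp add: algebra_simps)
  then have "\<bar>s * ln s - t * ln t - ln A * (s - t)\<bar>
      = A * \<bar>(s / A) * ln (s / A) - (t / A) * ln (t / A)\<bar>"
    using assms(6) by (simp add: abs_mult)
  also have "\<dots> \<le> A * (- \<delta> * ln \<delta>)" using mult_left_mono[OF bound] assms(6) by simp
  also have "\<dots> = \<epsilon> * ln (A / \<epsilon>)" using assms(5,6) by (simp add: \<delta>_def ln_div algebra_simps)
  finally show ?thesis .
qed

lemma unit_cube_eq_cbox: "(unit_cube :: (real ^ 'n) set) = cbox 0 (\<chi> i. 1)"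
  by (auto simp: unit_cube_def mem_box_cart)

lemma measure_unit_cube: "measure lborel (unit_cube :: (real ^ 'n) set) = 1"
proof -
  have "(0 :: real ^ 'n) \<in> cbox 0 (\<chi> i. 1)" by (simp add: mem_box_cart)
  then have "cbox (0 :: real ^ 'n) (\<chi> i. 1) \<noteq> {}" by blast
  then show ?thesis unfolding unit_cube_eq_cbox by (simp add: content_cbox_cart)
qed

lemma abs_diff_entropy_le:
  fixes p q :: "real ^ 'n \<Rightarrow> real" and c C :: real
  assumes p: "is_pdf_on_cube p" and q: "is_pdf_on_cube q"
    and "has_finite_entropy p" and "has_finite_entropy q"
    and bound: "\<forall>x\<in>unit_cube. \<bar>p x * ln (p x) - q x * ln (q x) - c * (p x - q x)\<bar> \<le> C"
  shows "\<bar>diff_entropy p - diff_entropy q\<bar> \<le> C"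
proof -
  define F where "F x = p x * ln (p x) - q x * ln (q x) - c * (p x - q x)" for x
  have int_p: "integrable lborel p" "(LINT x|lborel. p x) = 1"
    and int_q: "integrable lborel q" "(LINT x|lborel. q x) = 1"
    using p q by (auto simp: is_pdf_on_cube_def)
  have int_xlnx: "integrable lborel (\<lambda>x. p x * ln (p x))" "integrable lborel (\<lambda>x. q x * ln (q x))"
    using assms(3,4) by (auto simp: has_finite_entropy_def)
  have F_integral: "integral\<^sup>L lborel F = - diff_entropy p + diff_entropy q"
    unfolding F_def diff_entropy_def using int_p int_q int_xlnx by simp
  have F_integrable: "integrable lborel F" unfolding F_def using int_p int_q int_xlnx by simp
  have bound_integrable: "integrable lborel (\<lambda>x. C * indicator unit_cube x :: real)"
    unfolding unit_cube_eq_cbox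
    by (intro integrable_mult_right integrable_real_indicator emeasure_lborel_cbox_finite) auto
  have F_bound: "\<bar>F x\<bar> \<le> C * indicator unit_cube x" for x
    using bound p q by (cases "x \<in> unit_cube") (auto simp: F_def is_pdf_on_cube_def)
  have "\<bar>integral\<^sup>L lborel F\<bar> \<le> (LINT x|lborel. C * indicator unit_cube (x :: real ^ 'n))"
    by (rule integral_abs_bound_integral[OF F_integrable bound_integrable F_bound])
  then show ?thesis using F_integral measure_unit_cube[where 'n = 'n] by simp
qed

lemma threshold_le_exp_minus_2:
  "(sqrt (exp 1 ^ 2 + 4) - exp 1) / (2 * exp 1) \<le> exp (-2 :: real)"
proof -
  define e :: real where "e = exp 1"
  have "0 < e" by (simp add: e_def)
  have "sqrt (e ^ 2 + 4) \<le> sqrt ((e + 2 / e) ^ 2)"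
    using \<open>0 < e\<close> by (intro real_sqrt_le_mono) (simp add: power2_eq_square field_simps)
  also have "\<dots> = e + 2 / e" using \<open>0 < e\<close> by simp
  finally have "(sqrt (e ^ 2 + 4) - e) / (2 * e) \<le> (2 / e) / (2 * e)"
    using \<open>0 < e\<close> by (intro divide_right_mono) auto
  also have "\<dots> = exp (-2)"
    using \<open>0 < e\<close> by (simp add: e_def power2_eq_square exp_minus field_simps flip: exp_add)
  finally show ?thesis by (simp add: e_def)
qed

theorem lemma6:
  fixes p q :: "real ^ 'n \<Rightarrow> real" and \<epsilon> A :: real
  assumes "is_pdf_on_cube p" and "is_pdf_on_cube q"
    and "has_finite_entropy p" and "has_finite_entropy q"
    and "\<epsilon> > 0" and "A > 0"
    and "\<forall>x\<in>unit_cube. \<bar>p x - q x\<bar> \<le> \<epsilon>"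
    and "\<forall>x\<in>unit_cube. 0 \<le> p x \<and> p x \<le> A"
    and "\<epsilon> / A \<le> (sqrt (exp 1 ^ 2 + 4) - exp 1) / (2 * exp 1)"
  shows "\<bar>diff_entropy p - diff_entropy q\<bar> \<le> \<epsilon> * ln (A / \<epsilon>)"
proof (rule abs_diff_entropy_le[where c = "ln A"])
  have small: "\<epsilon> / A \<le> exp (-2)" using assms(9) threshold_le_exp_minus_2 by linarith
  have "ln (\<epsilon> / A) \<le> -2" using ln_mono[OF small] assms(5,6) by simp
  moreover have "exp (-2 :: real) \<le> 1" by simp
  ultimately have threshold: "1 + \<epsilon> / A \<le> - ln (\<epsilon> / A)" using small by linarith
  have "0 \<le> q x" for x using assms(2) by (simp add: is_pdf_on_cube_def)
  then show "\<forall>x\<in>unit_cube.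
      \<bar>p x * ln (p x) - q x * ln (q x) - ln A * (p x - q x)\<bar> \<le> \<epsilon> * ln (A / \<epsilon>)"
    using assms(5-8) threshold by (auto intro!: abs_xlnx_diff_shifted_le)
qed (use assms in auto)

end
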